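(* Let $s\in\mathbb{Z}$ and let $Q\subseteq P$ be non-empty with $\mathrm{diam}_\infty(Q)\le\alpha_s$. Then the set of grid points $a_{\alpha_s}(Q)$ is contained in a face of $\square_{\alpha_s}$. Equivalently, for every simplex $\sigma=\{p_0,\ldots,p_k\}$ of $\mathcal{R}^\infty_{\alpha_s/2}$, the set $\{a_{\alpha_s}(p_0),\ldots,a_{\alpha_s}(p_k)\}$ is contained in a face of $\square_{\alpha_s}$.
   Context: Fix $d\ge1$, $\lambda>0$, $\alpha_s=\lambda2^s$, and let $G_{\alpha_s}\subset\mathbb{R}^d$ be a translate of the grid $\alpha_s\mathbb{Z}^d$. $\square_{\alpha_s}$ is the cubical complex of faces $\prod_j[x_j,x_j+m_j]$ with $x\in G_{\alpha_s}$, $m_j\in\{0,\alpha_s\}$. $P\subset\mathbb{R}^d$ is a finite point set; for $p\in P$, $a_{\alpha_s}(p)$ is the point of $G_{\alpha_s}$ whose Voronoi cell (the cube of side $\alpha_s$ centered at it) contains $p$, assumed unique. $\mathrm{diam}_\infty$ is the diameter in the $L_\infty$-norm. $\mathcal{R}^\infty_\alpha$ denotes the Rips complex of $P$ at scale $2\alpha$ in the $L_\infty$-norm: the simplicial complex whose simplices are the non-empty subsets of $P$ of $L_\infty$-diameter at most $2\alpha$. *)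

theory Defs
  imports "HOL-Analysis.Analysis"
begin

definition grid :: "real \<Rightarrow> real^'d \<Rightarrow> (real^'d) set" where
  "grid alpha t = {g. \<exists>k::int^'d. g = t + (\<chi> i. alpha * of_int (k $ i))}"

definition voronoi_cell :: "real \<Rightarrow> real^'d \<Rightarrow> (real^'d) set" where
  "voronoi_cell alpha g = {p. \<forall>i. \<bar>p $ i - g $ i\<bar> \<le> alpha / 2}"

text \<open>The grid point whose Voronoi cell contains p (meaningful when unique).\<close>
definition grid_assign :: "real \<Rightarrow> real^'d \<Rightarrow> real^'d \<Rightarrow> real^'d" where
  "grid_assign alpha t p = (THE g. g \<in> grid alpha t \<and> p \<in> voronoi_cell alpha g)"

definition cube_face :: "real \<Rightarrow> real^'d \<Rightarrow> real^'d \<Rightarrow> (real^'d) set" where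
  "cube_face alpha x m = {y. \<forall>j. x $ j \<le> y $ j \<and> y $ j \<le> x $ j + m $ j}"

definition is_face :: "real \<Rightarrow> real^'d \<Rightarrow> (real^'d) set \<Rightarrow> bool" where
  "is_face alpha t F \<longleftrightarrow> (\<exists>x m. x \<in> grid alpha t \<and> (\<forall>j. m $ j \<in> {0, alpha}) \<and> F = cube_face alpha x m)"

definition diam_inf :: "(real^'d) set \<Rightarrow> real" where
  "diam_inf Q = Sup {infnorm (p - q) | p q. p \<in> Q \<and> q \<in> Q}"

end

theory Submission
  imports Defs
begin

text \<open>Uniqueness of the Voronoi assignment forces every point of \<open>P\<close> into the open cube of its
  grid point: a point on the boundary of a cell also lies in the neighbouring cell. Hence two
  points at \<open>L\<^sub>\<infinity>\<close>-distance at most \<open>\<alpha>\<close> get integer grid coordinates that differ by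
  less than 2, i.e. by at most 1, in every direction. The coordinates of \<open>a\<^sub>\<alpha>(Q)\<close> in
  direction \<open>j\<close> therefore lie in \<open>{m\<^sub>j, m\<^sub>j + 1}\<close> with \<open>m\<^sub>j\<close> their minimum, so \<open>a\<^sub>\<alpha>(Q)\<close>
  lies in the cube of side \<open>\<alpha>\<close> with lowest corner \<open>(m\<^sub>j)\<^sub>j\<close>.\<close>

definition grid_point :: "real \<Rightarrow> real^'d \<Rightarrow> int^'d \<Rightarrow> real^'d" where
  "grid_point alpha t k = t + (\<chi> i. alpha * of_int (k $ i))"

lemma grid_point_component [simp]:
  "grid_point alpha t k $ i = t $ i + alpha * of_int (k $ i)"
  by (simp add: grid_point_def)

lemma grid_eq_range_grid_point: "grid alpha t = range (grid_point alpha t)"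
  by (auto simp: grid_def grid_point_def)

lemma voronoi_cell_boundary_in_neighbour:
  fixes p t :: "real^'d" and k :: "int^'d"
  assumes "alpha > 0"
    and p: "p \<in> voronoi_cell alpha (grid_point alpha t k)"
    and boundary: "\<bar>p $ j - grid_point alpha t k $ j\<bar> = alpha / 2"
  shows "\<exists>g \<in> grid alpha t. g \<noteq> grid_point alpha t k \<and> p \<in> voronoi_cell alpha g"
proof -
  define e :: int where "e = (if p $ j > grid_point alpha t k $ j then 1 else -1)"
  define k' :: "int^'d" where "k' = (\<chi> i. if i = j then k $ i + e else k $ i)"
  have reflect: "p $ j - grid_point alpha t k' $ j = - (p $ j - grid_point alpha t k $ j)"
    using boundary by (auto simp: k'_def e_def algebra_simps abs_if split: if_splits)
  then have "\<bar>p $ j - grid_point alpha t k' $ j\<bar> = alpha / 2"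
    using boundary by (simp only: abs_minus_cancel)
  then have "p \<in> voronoi_cell alpha (grid_point alpha t k')"
    using p by (auto simp: voronoi_cell_def k'_def)
  moreover have "grid_point alpha t k' $ j \<noteq> grid_point alpha t k $ j"
    using reflect boundary \<open>alpha > 0\<close> by auto
  ultimately show ?thesis
    by (metis grid_eq_range_grid_point rangeI)
qed

lemma grid_assign_in_open_cell:
  fixes p t :: "real^'d"
  assumes "alpha > 0"
    and uniq: "\<exists>!g. g \<in> grid alpha t \<and> p \<in> voronoi_cell alpha g"
  shows "\<exists>k. grid_assign alpha t p = grid_point alpha t k
           \<and> (\<forall>j. \<bar>p $ j - grid_point alpha t k $ j\<bar> < alpha / 2)"
proof -
  have assigned: "grid_assign alpha t p \<in> grid alpha t \<and> p \<in> voronoi_cell alpha (grid_assign alpha t p)"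
    unfolding grid_assign_def by (rule theI'[OF uniq])
  then obtain k where k: "grid_assign alpha t p = grid_point alpha t k"
    by (auto simp: grid_eq_range_grid_point)
  have "\<bar>p $ j - grid_point alpha t k $ j\<bar> < alpha / 2" for j
  proof (rule ccontr)
    assume "\<not> ?thesis"
    moreover have "\<bar>p $ j - grid_point alpha t k $ j\<bar> \<le> alpha / 2"
      using assigned k by (simp add: voronoi_cell_def)
    ultimately have "\<bar>p $ j - grid_point alpha t k $ j\<bar> = alpha / 2"
      by linarith
    with \<open>alpha > 0\<close> assigned k obtain g where
      "g \<in> grid alpha t" "g \<noteq> grid_assign alpha t p" "p \<in> voronoi_cell alpha g"
      using voronoi_cell_boundary_in_neighbour by metis
    with assigned uniq show False by blast
  qed
  with k show ?thesis by blast
qed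

lemma component_dist_le_diam_inf:
  fixes Q :: "(real^'d) set"
  assumes "bounded Q" "p \<in> Q" "q \<in> Q"
  shows "\<bar>p $ j - q $ j\<bar> \<le> diam_inf Q"
proof -
  obtain B where B: "\<And>x. x \<in> Q \<Longrightarrow> norm x \<le> B"
    using \<open>bounded Q\<close> by (auto simp: bounded_iff)
  have "infnorm (x - y) \<le> 2 * B" if "x \<in> Q" "y \<in> Q" for x y
    using infnorm_le_norm[of "x - y"] norm_triangle_ineq4[of x y] B[OF that(1)] B[OF that(2)]
    by linarith
  then have "bdd_above {infnorm (x - y) | x y. x \<in> Q \<and> y \<in> Q}"
    by (intro bdd_aboveI[of _ "2 * B"]) auto
  then have "infnorm (p - q) \<le> diam_inf Q"
    unfolding diam_inf_def using assms(2,3) by (auto intro: cSup_upper)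
  moreover have "\<bar>p $ j - q $ j\<bar> \<le> infnorm (p - q)"
    using component_le_infnorm_cart[of "p - q" j] by simp
  ultimately show ?thesis by linarith
qed

lemma abs_diff_int_le_1_if_near_lattice:
  fixes a b :: int and alpha c x y :: real
  assumes "alpha > 0"
    and "\<bar>x - (c + alpha * a)\<bar> < alpha / 2" "\<bar>y - (c + alpha * b)\<bar> < alpha / 2"
    and "\<bar>x - y\<bar> \<le> alpha"
  shows "\<bar>a - b\<bar> \<le> 1"
proof -
  have "alpha * \<bar>of_int (a - b)\<bar> < alpha * 2"
    using assms(2-4) by (simp add: abs_mult algebra_simps abs_if split: if_splits)
  then have "\<bar>of_int (a - b)\<bar> < (2 :: real)"
    using \<open>alpha > 0\<close> by simp
  then show ?thesis by linarith
qed

lemma int_set_within_Min_plus_1: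
  fixes S :: "int set"
  assumes "finite S" "\<forall>a\<in>S. \<forall>b\<in>S. \<bar>a - b\<bar> \<le> 1" "a \<in> S"
  shows "Min S \<le> a \<and> a \<le> Min S + 1"
proof -
  have "Min S \<in> S" using assms(1,3) by (auto intro: Min_in)
  with assms show ?thesis by force
qed

lemma grid_points_in_face:
  fixes K :: "(int^'d) set"
  assumes "alpha \<ge> 0" "finite K"
    and adjacent: "\<forall>k\<in>K. \<forall>l\<in>K. \<forall>j. \<bar>k $ j - l $ j\<bar> \<le> 1"
  shows "\<exists>F. is_face alpha t F \<and> grid_point alpha t ` K \<subseteq> F"
proof -
  define corner :: "int^'d" where "corner = (\<chi> j. Min ((\<lambda>k. k $ j) ` K))"
  define F where "F = cube_face alpha (grid_point alpha t corner) (\<chi> j. alpha)"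
  have "is_face alpha t F"
    unfolding is_face_def F_def grid_eq_range_grid_point
    by (intro exI[of _ "grid_point alpha t corner"] exI[of _ "\<chi> j. alpha"]) auto
  moreover have "grid_point alpha t k \<in> F" if "k \<in> K" for k
  proof -
    have "real_of_int (corner $ j) \<le> of_int (k $ j) \<and> real_of_int (k $ j) \<le> of_int (corner $ j) + 1" for j
      unfolding corner_def
      using int_set_within_Min_plus_1[of "(\<lambda>k. k $ j) ` K" "k $ j"] adjacent \<open>finite K\<close> that
      by auto
    then have "alpha * of_int (corner $ j) \<le> alpha * of_int (k $ j)
               \<and> alpha * of_int (k $ j) \<le> alpha * (of_int (corner $ j) + 1)" for j
      using \<open>alpha \<ge> 0\<close> by (simp add: mult_left_mono)
    then show ?thesis by (simp add: F_def cube_face_def distrib_left)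
  qed
  ultimately show ?thesis by blast
qed

theorem lemma6:
  fixes P Q :: "(real^'d) set" and lambda :: real and s :: int and t :: "real^'d"
  defines "alpha \<equiv> lambda * 2 powr (of_int s)"
  assumes "lambda > 0"
    and "finite P"
    and uniq: "\<forall>p\<in>P. \<exists>!g. g \<in> grid alpha t \<and> p \<in> voronoi_cell alpha g"
    and "Q \<subseteq> P" and "Q \<noteq> {}"
    and "diam_inf Q \<le> alpha"
  shows "\<exists>F. is_face alpha t F \<and> grid_assign alpha t ` Q \<subseteq> F"
proof -
  have "alpha > 0" unfolding alpha_def using \<open>lambda > 0\<close> by simp
  have "finite Q" using \<open>finite P\<close> \<open>Q \<subseteq> P\<close> by (rule finite_subset[rotated])
  have "\<forall>q\<in>Q. \<exists>kq. grid_assign alpha t q = grid_point alpha t kq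
      \<and> (\<forall>j. \<bar>q $ j - grid_point alpha t kq $ j\<bar> < alpha / 2)"
    using grid_assign_in_open_cell[OF \<open>alpha > 0\<close>] uniq \<open>Q \<subseteq> P\<close> by blast
  then obtain k where k: "\<And>q. q \<in> Q \<Longrightarrow> grid_assign alpha t q = grid_point alpha t (k q)
      \<and> (\<forall>j. \<bar>q $ j - grid_point alpha t (k q) $ j\<bar> < alpha / 2)"
    by (metis (no_types))
  have "grid_assign alpha t ` Q = grid_point alpha t ` k ` Q"
    unfolding image_image by (rule image_cong) (simp_all add: k)
  moreover have "\<bar>k p $ j - k q $ j\<bar> \<le> 1" if "p \<in> Q" "q \<in> Q" for p q j
  proof (rule abs_diff_int_le_1_if_near_lattice[OF \<open>alpha > 0\<close>])
    show "\<bar>p $ j - (t $ j + alpha * of_int (k p $ j))\<bar> < alpha / 2"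
      using k[OF \<open>p \<in> Q\<close>] by simp
    show "\<bar>q $ j - (t $ j + alpha * of_int (k q $ j))\<bar> < alpha / 2"
      using k[OF \<open>q \<in> Q\<close>] by simp
    show "\<bar>p $ j - q $ j\<bar> \<le> alpha"
      using component_dist_le_diam_inf[OF finite_imp_bounded[OF \<open>finite Q\<close>] that, of j]
        \<open>diam_inf Q \<le> alpha\<close> by linarith
  qed
  then have "\<exists>F. is_face alpha t F \<and> grid_point alpha t ` k ` Q \<subseteq> F"
    using \<open>alpha > 0\<close> \<open>finite Q\<close> by (intro grid_points_in_face) auto
  ultimately show ?thesis by (simp only:)
qed

end
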